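(* Let $\mathcal K\subset\mathbb R^d$ be a convex body containing the unit ball $B_1(0)$, $h>0$, $\pi^X$ the uniform distribution on $\mathcal K$ and $\pi^Y=\pi^X*\mathcal N(0,hI_d)$, i.e. $\pi^Y(y)=\frac1{\operatorname{vol}(\mathcal K)(2\pi h)^{d/2}}\int_{\mathcal K}\exp(-\frac1{2h}|y-x|^2)\,\mathrm dx$. For $\delta>0$ let $\mathcal K_\delta=\{x\in\mathbb R^d:\operatorname{dist}(x,\mathcal K)\le\delta\}$. Then $\pi^Y(\mathcal K_\delta^c)\le\exp\big(-\frac{\delta^2}{2h}+\delta d\big)$. *)

theory Defs
  imports "HOL-Analysis.Analysis"
begin

definition convex_body :: "'a::euclidean_space set \<Rightarrow> bool" where
  "convex_body K \<longleftrightarrow> convex K \<and> compact K \<and> interior K \<noteq> {}"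

definition piY_density :: "'a::euclidean_space set \<Rightarrow> real \<Rightarrow> 'a \<Rightarrow> ennreal" where
  "piY_density K h y =
     (\<integral>\<^sup>+ x. indicator K x * ennreal (exp (- (norm (y - x))\<^sup>2 / (2 * h))) \<partial>lborel)
     / (emeasure lborel K * ennreal ((2 * pi * h) powr (real DIM('a) / 2)))"

definition piY :: "'a::euclidean_space set \<Rightarrow> real \<Rightarrow> 'a set \<Rightarrow> ennreal" where
  "piY K h A = (\<integral>\<^sup>+ y. indicator A y * piY_density K h y \<partial>lborel)"

definition enlarge :: "'a::euclidean_space set \<Rightarrow> real \<Rightarrow> 'a set" where
  "enlarge K \<delta> = {x. infdist x K \<le> \<delta>}"

end

theory Submission
  imports Defs "HOL-Probability.Probability"
begin

text \<open>
  Let \<open>y\<close> be at distance more than \<open>\<delta>\<close> from \<open>K\<close>, let \<open>p\<close> be its nearest point in \<open>K\<close> and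
  \<open>u\<close> the vector of length \<open>\<delta>\<close> pointing from \<open>p\<close> towards \<open>y\<close>. As \<open>K\<close> lies in the half-space
  \<open>(y - p) \<bullet> (x - p) \<le> 0\<close>, every \<open>x \<in> K\<close> satisfies \<open>|y - x|\<^sup>2 \<ge> \<delta>\<^sup>2 + |y - (x + u)|\<^sup>2\<close>,
  and \<open>x + u \<in> (1 + \<delta>) K\<close> because \<open>u \<in> \<delta> B\<^sub>1(0) \<subseteq> \<delta> K\<close>. So the Gaussian mass that \<open>y\<close>
  receives from \<open>K\<close> is at most \<open>exp (-\<delta>\<^sup>2/2h)\<close> times the mass it receives from \<open>(1 + \<delta>) K\<close>.
  Integrating over \<open>y\<close> (Tonelli) bounds \<open>\<pi>\<^sup>Y(K\<^sub>\<delta>\<^sup>c)\<close> by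
  \<open>exp (-\<delta>\<^sup>2/2h) vol((1 + \<delta>) K) / vol K = exp (-\<delta>\<^sup>2/2h) (1 + \<delta>)\<^sup>d \<le> exp (-\<delta>\<^sup>2/2h + \<delta> d)\<close>.
\<close>

definition gauss_conv :: "'a::euclidean_space set \<Rightarrow> real \<Rightarrow> 'a \<Rightarrow> ennreal" where
  "gauss_conv S h y = (\<integral>\<^sup>+x. indicator S x * ennreal (exp (- (norm (y - x))\<^sup>2 / (2 * h))) \<partial>lborel)"

lemma borel_measurable_gauss_conv [measurable]:
  assumes [measurable]: "S \<in> sets borel"
  shows "gauss_conv S h \<in> borel_measurable borel"
  unfolding gauss_conv_def by measurable

lemma piY_density_eq_gauss_conv:
  "piY_density K h y =
     gauss_conv K h y / (emeasure lborel K * ennreal ((2 * pi * h) powr (real DIM('a) / 2)))"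
  for K :: "'a::euclidean_space set"
  unfolding piY_density_def gauss_conv_def ..

lemma nn_integral_lborel_translate:
  fixes c :: "'a::euclidean_space"
  assumes [measurable]: "f \<in> borel_measurable borel"
  shows "(\<integral>\<^sup>+x. f (c + x) \<partial>lborel) = (\<integral>\<^sup>+x. f x \<partial>lborel)"
proof -
  have "(\<integral>\<^sup>+x. f (c + x) \<partial>lborel) = (\<integral>\<^sup>+x. f x \<partial>distr lborel borel ((+) c))"
    by (simp add: nn_integral_distr)
  then show ?thesis
    by (simp add: lborel_distr_plus)
qed

lemma nn_integral_exp_neg_square_div:
  assumes "h > 0"
  shows "(\<integral>\<^sup>+t. ennreal (exp (- t\<^sup>2 / (2 * h))) \<partial>lborel) = ennreal (sqrt (2 * pi * h))"
proof -
  have density: "exp (- t\<^sup>2 / (2 * h)) = sqrt (2 * pi * h) * normal_density 0 (sqrt h) t" for t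
    using assms by (simp add: normal_density_def)
  have total_mass: "(\<integral>\<^sup>+t. ennreal (normal_density 0 (sqrt h) t) \<partial>lborel) = 1"
    using assms integral_normal_moment_even[of "sqrt h" 0 0]
    by (subst nn_integral_eq_integral) auto
  have "(\<integral>\<^sup>+t. ennreal (exp (- t\<^sup>2 / (2 * h))) \<partial>lborel)
      = (\<integral>\<^sup>+t. ennreal (sqrt (2 * pi * h)) * ennreal (normal_density 0 (sqrt h) t) \<partial>lborel)"
    using assms by (subst density) (simp add: ennreal_mult)
  also have "\<dots> = ennreal (sqrt (2 * pi * h))"
    by (subst nn_integral_cmult) (simp_all add: total_mass)
  finally show ?thesis .
qed

lemma nn_integral_gauss_kernel:
  fixes x :: "'a::euclidean_space"
  assumes "h > 0"
  shows "(\<integral>\<^sup>+y. ennreal (exp (- (norm (y - x))\<^sup>2 / (2 * h))) \<partial>lborel)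
           = ennreal ((2 * pi * h) powr (real DIM('a) / 2))"
proof -
  have product: "ennreal (exp (- (norm y)\<^sup>2 / (2 * h)))
      = (\<Prod>b\<in>Basis. ennreal (exp (- (y \<bullet> b)\<^sup>2 / (2 * h))))" for y :: 'a
  proof -
    have "(norm y)\<^sup>2 = (\<Sum>b\<in>Basis. (y \<bullet> b)\<^sup>2)"
      unfolding power2_norm_eq_inner by (subst euclidean_inner) (simp add: power2_eq_square)
    then have "- (norm y)\<^sup>2 / (2 * h) = (\<Sum>b\<in>Basis. - (y \<bullet> b)\<^sup>2 / (2 * h))"
      by (simp add: sum_divide_distrib sum_negf)
    then show ?thesis
      by (simp add: exp_sum prod_ennreal)
  qed
  have "(\<integral>\<^sup>+y. ennreal (exp (- (norm (y - x))\<^sup>2 / (2 * h))) \<partial>lborel)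
      = (\<integral>\<^sup>+(y::'a). ennreal (exp (- (norm y)\<^sup>2 / (2 * h))) \<partial>lborel)"
    using nn_integral_lborel_translate[of "\<lambda>y. ennreal (exp (- (norm (y - x))\<^sup>2 / (2 * h)))" x, symmetric]
    by simp
  also have "\<dots> = (\<Prod>b\<in>(Basis::'a set). \<integral>\<^sup>+t. ennreal (exp (- t\<^sup>2 / (2 * h))) \<partial>lborel)"
    unfolding product by (rule nn_integral_lborel_prod) auto
  also have "\<dots> = ennreal (sqrt (2 * pi * h)) ^ DIM('a)"
    using nn_integral_exp_neg_square_div[OF assms] by simp
  also have "\<dots> = ennreal ((2 * pi * h) powr (real DIM('a) / 2))"
    using assms by (simp add: ennreal_power sqrt_def root_powr_inverse powr_realpow[symmetric] powr_powr)
  finally show ?thesis .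
qed

lemma nn_integral_gauss_conv:
  fixes S :: "'a::euclidean_space set"
  assumes [measurable]: "S \<in> sets borel" and "h > 0"
  shows "(\<integral>\<^sup>+y. gauss_conv S h y \<partial>lborel)
           = emeasure lborel S * ennreal ((2 * pi * h) powr (real DIM('a) / 2))"
proof -
  have "(\<integral>\<^sup>+y. gauss_conv S h y \<partial>lborel)
      = (\<integral>\<^sup>+x. \<integral>\<^sup>+y. indicator S x * ennreal (exp (- (norm (y - x))\<^sup>2 / (2 * h))) \<partial>lborel \<partial>lborel)"
    unfolding gauss_conv_def by (rule lborel_pair.Fubini') measurable
  also have "\<dots> = (\<integral>\<^sup>+x. indicator S x * (\<integral>\<^sup>+y. ennreal (exp (- (norm (y - x))\<^sup>2 / (2 * h))) \<partial>lborel) \<partial>lborel)"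
    by (intro nn_integral_cong nn_integral_cmult) measurable
  also have "\<dots> = (\<integral>\<^sup>+x. indicator S x * ennreal ((2 * pi * h) powr (real DIM('a) / 2)) \<partial>lborel)"
    by (simp only: nn_integral_gauss_kernel[OF \<open>h > 0\<close>])
  finally show ?thesis
    by (simp add: nn_integral_multc)
qed

lemma norm_diff_sq_ge_shift:
  fixes w z :: "'a::real_inner"
  assumes "w \<bullet> z \<le> 0" and "0 \<le> \<delta>" and "\<delta> \<le> norm w"
  shows "\<delta>\<^sup>2 + (norm (w - z - (\<delta> / norm w) *\<^sub>R w))\<^sup>2 \<le> (norm (w - z))\<^sup>2"
proof -
  define t where "t = \<delta> / norm w"
  have "t * (w \<bullet> z) \<le> 0"
    using assms by (simp add: t_def mult_nonneg_nonpos divide_nonpos_nonneg)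
  then have "(norm (w - z - t *\<^sub>R w))\<^sup>2 \<le> (norm (w - z))\<^sup>2 - 2 * t * (norm w)\<^sup>2 + t\<^sup>2 * (norm w)\<^sup>2"
    unfolding power2_norm_eq_inner
    by (simp add: inner_diff_left inner_diff_right inner_commute algebra_simps power2_eq_square)
  also have "- 2 * t * (norm w)\<^sup>2 + t\<^sup>2 * (norm w)\<^sup>2 = \<delta>\<^sup>2 - 2 * \<delta> * norm w"
    using assms by (cases "w = 0") (simp_all add: t_def power2_eq_square field_simps)
  moreover have "2 * \<delta>\<^sup>2 \<le> 2 * \<delta> * norm w"
    using assms by (simp add: power2_eq_square mult_left_mono)
  ultimately show ?thesis
    by (simp add: t_def)
qed

lemma closest_point_shift_bound:
  fixes K :: "'a::euclidean_space set"
  assumes "convex K" "closed K" "K \<noteq> {}" and "0 \<le> \<delta>" "\<delta> \<le> infdist y K"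
  obtains u where "norm u \<le> \<delta>"
    and "\<And>x. x \<in> K \<Longrightarrow> \<delta>\<^sup>2 + (norm (y - (x + u)))\<^sup>2 \<le> (norm (y - x))\<^sup>2"
proof
  define p where "p = closest_point K y"
  define w where "w = y - p"
  have "p \<in> K"
    unfolding p_def using assms by (simp add: closest_point_in_set)
  then have "\<delta> \<le> norm w"
    using assms infdist_le[of p K y] by (simp add: w_def dist_norm)
  then show "norm ((\<delta> / norm w) *\<^sub>R w) \<le> \<delta>"
    using assms by simp
  fix x assume "x \<in> K"
  then have "w \<bullet> (x - p) \<le> 0"
    unfolding w_def p_def using assms closest_point_dot by blast
  from norm_diff_sq_ge_shift[OF this \<open>0 \<le> \<delta>\<close> \<open>\<delta> \<le> norm w\<close>]
  show "\<delta>\<^sup>2 + (norm (y - (x + (\<delta> / norm w) *\<^sub>R w)))\<^sup>2 \<le> (norm (y - x))\<^sup>2"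
    by (simp add: w_def algebra_simps)
qed

lemma add_norm_le_mem_dilation:
  fixes K :: "'a::real_normed_vector set"
  assumes "convex K" "cball 0 1 \<subseteq> K" "x \<in> K" "norm u \<le> \<delta>"
  shows "x + u \<in> (*\<^sub>R) (1 + \<delta>) ` K"
proof (cases "\<delta> = 0")
  case True
  with assms show ?thesis
    by simp
next
  case False
  then have "\<delta> > 0"
    using assms(4) norm_ge_zero[of u] by linarith
  have "norm ((1 / \<delta>) *\<^sub>R u) \<le> 1"
    using \<open>\<delta> > 0\<close> assms(4) by (simp add: divide_le_eq_1)
  then have "(1 / \<delta>) *\<^sub>R u \<in> K"
    using assms(2) by auto
  then have "(1 / (1 + \<delta>)) *\<^sub>R x + (\<delta> / (1 + \<delta>)) *\<^sub>R ((1 / \<delta>) *\<^sub>R u) \<in> K"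
    using assms(1,3) \<open>\<delta> > 0\<close> by (intro convexD) (simp_all add: add_divide_distrib[symmetric])
  moreover have "x + u = (1 + \<delta>) *\<^sub>R ((1 / (1 + \<delta>)) *\<^sub>R x + (\<delta> / (1 + \<delta>)) *\<^sub>R ((1 / \<delta>) *\<^sub>R u))"
    using \<open>\<delta> > 0\<close> by (simp add: scaleR_add_right)
  ultimately show ?thesis
    by blast
qed

lemma emeasure_lborel_scaling:
  fixes K :: "'a::euclidean_space set"
  assumes "closed K"
  shows "emeasure lborel ((*\<^sub>R) s ` K) = ennreal (\<bar>s\<bar> ^ DIM('a)) * emeasure lborel K"
proof -
  have "emeasure lborel ((*\<^sub>R) s ` K) = emeasure lebesgue ((\<lambda>x. s *\<^sub>R x + 0) ` K)"
    using closed_scaling[OF assms] by simp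
  also have "\<dots> = ennreal (\<bar>s\<bar> ^ DIM('a)) * emeasure lborel K"
    using assms by (subst emeasure_lebesgue_affine) simp
  finally show ?thesis .
qed

lemma gauss_conv_le_dilation:
  fixes K :: "'a::euclidean_space set"
  assumes "convex K" "closed K" "cball 0 1 \<subseteq> K" "h > 0" "0 \<le> \<delta>" "\<delta> \<le> infdist y K"
  shows "gauss_conv K h y \<le> ennreal (exp (- \<delta>\<^sup>2 / (2 * h))) * gauss_conv ((*\<^sub>R) (1 + \<delta>) ` K) h y"
proof -
  define D where "D = (*\<^sub>R) (1 + \<delta>) ` K"
  have [measurable]: "D \<in> sets borel"
    unfolding D_def using closed_scaling[OF \<open>closed K\<close>] by simp
  define g where "g x = indicator D x * ennreal (exp (- (norm (y - x))\<^sup>2 / (2 * h)))" for x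
  have [measurable]: "g \<in> borel_measurable borel"
    unfolding g_def by measurable
  have "K \<noteq> {}"
    using assms(3) by auto
  then obtain u where "norm u \<le> \<delta>"
    and shift: "\<And>x. x \<in> K \<Longrightarrow> \<delta>\<^sup>2 + (norm (y - (x + u)))\<^sup>2 \<le> (norm (y - x))\<^sup>2"
    using closest_point_shift_bound[OF assms(1,2) _ assms(5,6)] by blast
  have pointwise: "indicator K x * ennreal (exp (- (norm (y - x))\<^sup>2 / (2 * h)))
      \<le> ennreal (exp (- \<delta>\<^sup>2 / (2 * h))) * g (u + x)" for x
  proof (cases "x \<in> K")
    case True
    then have "u + x \<in> D"
      unfolding D_def using add_norm_le_mem_dilation[OF assms(1,3) True \<open>norm u \<le> \<delta>\<close>]
      by (simp add: add.commute)
    moreover have "- (norm (y - x))\<^sup>2 / (2 * h) \<le> - \<delta>\<^sup>2 / (2 * h) + - (norm (y - (u + x)))\<^sup>2 / (2 * h)"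
      using shift[OF True] \<open>h > 0\<close> by (simp add: add.commute field_simps)
    then have "exp (- (norm (y - x))\<^sup>2 / (2 * h))
        \<le> exp (- \<delta>\<^sup>2 / (2 * h)) * exp (- (norm (y - (u + x)))\<^sup>2 / (2 * h))"
      by (simp add: exp_add[symmetric])
    ultimately show ?thesis
      using True by (simp add: g_def ennreal_mult[symmetric] ennreal_leI)
  qed simp
  have "gauss_conv K h y \<le> (\<integral>\<^sup>+x. ennreal (exp (- \<delta>\<^sup>2 / (2 * h))) * g (u + x) \<partial>lborel)"
    unfolding gauss_conv_def by (intro nn_integral_mono pointwise)
  also have "\<dots> = ennreal (exp (- \<delta>\<^sup>2 / (2 * h))) * (\<integral>\<^sup>+x. g x \<partial>lborel)"
    by (simp add: nn_integral_cmult nn_integral_lborel_translate)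
  finally show ?thesis
    unfolding gauss_conv_def g_def D_def .
qed

lemma piY_compl_enlarge_le:
  fixes K :: "'a::euclidean_space set"
  assumes "convex K" "compact K" "cball 0 1 \<subseteq> K" "h > 0" "0 \<le> \<delta>"
  shows "piY K h (- enlarge K \<delta>) \<le> ennreal (exp (- \<delta>\<^sup>2 / (2 * h)) * (1 + \<delta>) ^ DIM('a))"
proof -
  have "closed K" and [measurable]: "K \<in> sets borel"
    using \<open>compact K\<close> by (simp_all add: compact_imp_closed)
  define e where "e = exp (- \<delta>\<^sup>2 / (2 * h))"
  define N where "N = emeasure lborel K * ennreal ((2 * pi * h) powr (real DIM('a) / 2))"
  define D where "D = (*\<^sub>R) (1 + \<delta>) ` K"
  have [measurable]: "D \<in> sets borel"
    unfolding D_def using closed_scaling[OF \<open>closed K\<close>] by simp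
  have "0 < emeasure lborel (cball (0::'a) 1)"
    by (simp add: emeasure_cball)
  also have "\<dots> \<le> emeasure lborel K"
    using assms(3) by (intro emeasure_mono) simp_all
  finally have "N \<noteq> 0" "N \<noteq> \<top>"
    using emeasure_compact_finite[OF \<open>compact K\<close>] \<open>h > 0\<close>
    by (simp_all add: N_def ennreal_mult_eq_top_iff)
  have "piY K h (- enlarge K \<delta>) \<le> (\<integral>\<^sup>+y. ennreal e * gauss_conv D h y / N \<partial>lborel)"
    unfolding piY_def piY_density_eq_gauss_conv N_def[symmetric]
  proof (intro nn_integral_mono)
    fix y
    show "indicator (- enlarge K \<delta>) y * (gauss_conv K h y / N) \<le> ennreal e * gauss_conv D h y / N"
      using gauss_conv_le_dilation[OF \<open>convex K\<close> \<open>closed K\<close> assms(3,4,5), of y]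
      by (cases "y \<in> enlarge K \<delta>") (simp_all add: enlarge_def e_def D_def divide_right_mono_ennreal)
  qed
  also have "\<dots> = ennreal e * (ennreal ((1 + \<delta>) ^ DIM('a)) * N) / N"
    using emeasure_lborel_scaling[OF \<open>closed K\<close>, of "1 + \<delta>"] \<open>h > 0\<close> \<open>0 \<le> \<delta>\<close>
    by (simp add: nn_integral_divide nn_integral_cmult nn_integral_gauss_conv N_def D_def[symmetric] mult.assoc)
  also have "\<dots> = ennreal (e * (1 + \<delta>) ^ DIM('a)) * N / N"
    using \<open>0 \<le> \<delta>\<close> ennreal_mult[of e "(1 + \<delta>) ^ DIM('a)"] by (simp only: e_def mult_ac) simp
  also have "\<dots> = ennreal (e * (1 + \<delta>) ^ DIM('a))"
    using \<open>N \<noteq> 0\<close> \<open>N \<noteq> \<top>\<close> by (rule mult_divide_eq_ennreal)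
  finally show ?thesis
    unfolding e_def .
qed

lemma one_add_power_le_exp:
  fixes x :: real
  assumes "-1 \<le> x"
  shows "(1 + x) ^ n \<le> exp (x * real n)"
proof -
  have "(1 + x) ^ n \<le> exp x ^ n"
    using assms by (intro power_mono) (simp_all add: add.commute exp_ge_add_one_self)
  then show ?thesis
    by (simp add: exp_of_nat_mult[symmetric] mult.commute)
qed

theorem mainTheorem9:
  fixes K :: "'a::euclidean_space set" and h \<delta> :: real
  assumes "convex_body K"
    and "cball 0 1 \<subseteq> K"
    and "h > 0"
    and "\<delta> > 0"
  shows "piY K h (- enlarge K \<delta>)
           \<le> ennreal (exp (- \<delta>\<^sup>2 / (2 * h) + \<delta> * real DIM('a)))"
proof -
  have "convex K" "compact K"
    using assms(1) unfolding convex_body_def by auto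
  then have "piY K h (- enlarge K \<delta>) \<le> ennreal (exp (- \<delta>\<^sup>2 / (2 * h)) * (1 + \<delta>) ^ DIM('a))"
    using assms(2-4) by (intro piY_compl_enlarge_le) simp_all
  also have "\<dots> \<le> ennreal (exp (- \<delta>\<^sup>2 / (2 * h) + \<delta> * real DIM('a)))"
    using one_add_power_le_exp[of \<delta> "DIM('a)"] assms(4) unfolding exp_add by (intro ennreal_leI) simp
  finally show ?thesis .
qed

end
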